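(* Let $A,B\in\mathbb{R}_+^{n\times n}$ be circulant matrices with $\lambda(A)=\lambda(B)\ne0$ and $A\le B$. Then $$x\in\mathrm{Attr}(B)\iff B^{n^2}_{i\bullet}\otimes x=B^{n^2}_{j\bullet}\otimes x\ \text{ for all } i,j\in\{1,\dots,n\}\text{ with } i\sim_A j.$$
   Context: Max algebra on $\mathbb{R}_+$: $\oplus=\max$, ordinary product; $B^t$ max-algebraic power, $B^t_{i\bullet}$ its $i$-th row, $B^t_{i\bullet}\otimes x=\max_k(B^t)_{i,k}x_k$. $\lambda(\cdot)$: greatest max-algebraic eigenvalue (maximum cycle geometric mean). $\mathrm{Attr}(B)=\{x\in\mathbb{R}_+^n: B^{t+1}\otimes x=\lambda(B)B^t\otimes x\text{ for some }t\ge0\}$. The critical digraph $\mathcal{C}(A)$ consists of nodes and edges of the cycles of the weighted digraph of $A$ whose geometric mean equals $\lambda(A)$; $i\sim_A j$ means $i$ and $j$ lie in the same strongly connected component of $\mathcal{C}(A)$. Circulant: $A_{i,j}=a_t$ with $t\equiv j-i\pmod n$, $t\in\{0,\dots,n-1\}$. *)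

theory Defs
  imports Complex_Main
begin

text \<open>An n x n matrix is a function
  nat \<Rightarrow> nat \<Rightarrow> real, only the entries with indices in {0..<n} matter
  (index i here corresponds to i+1 in the paper).\<close>

definition mmult :: "nat \<Rightarrow> (nat \<Rightarrow> nat \<Rightarrow> real) \<Rightarrow> (nat \<Rightarrow> nat \<Rightarrow> real) \<Rightarrow> nat \<Rightarrow> nat \<Rightarrow> real" where
  "mmult n A B i j = Max ((\<lambda>k. A i k * B k j) ` {0..<n})"

definition mone :: "nat \<Rightarrow> nat \<Rightarrow> real" where
  "mone i j = (if i = j then 1 else 0)"

primrec mpow :: "nat \<Rightarrow> (nat \<Rightarrow> nat \<Rightarrow> real) \<Rightarrow> nat \<Rightarrow> nat \<Rightarrow> nat \<Rightarrow> real" where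
  "mpow n A 0 = mone"
| "mpow n A (Suc t) = mmult n A (mpow n A t)"

definition row_mult :: "nat \<Rightarrow> (nat \<Rightarrow> nat \<Rightarrow> real) \<Rightarrow> nat \<Rightarrow> (nat \<Rightarrow> real) \<Rightarrow> real" where
  "row_mult n M i x = Max ((\<lambda>k. M i k * x k) ` {0..<n})"

definition is_cycle :: "nat \<Rightarrow> (nat \<Rightarrow> nat \<Rightarrow> real) \<Rightarrow> nat list \<Rightarrow> bool" where
  "is_cycle n A cs \<longleftrightarrow> cs \<noteq> [] \<and> distinct cs \<and> set cs \<subseteq> {0..<n} \<and>
     (\<forall>m<length cs. A (cs ! m) (cs ! ((m + 1) mod length cs)) > 0)"

definition cycle_weight :: "(nat \<Rightarrow> nat \<Rightarrow> real) \<Rightarrow> nat list \<Rightarrow> real" where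
  "cycle_weight A cs = (\<Prod>m<length cs. A (cs ! m) (cs ! ((m + 1) mod length cs)))"

definition cycle_mean :: "(nat \<Rightarrow> nat \<Rightarrow> real) \<Rightarrow> nat list \<Rightarrow> real" where
  "cycle_mean A cs = root (length cs) (cycle_weight A cs)"

definition cycle_edges :: "nat list \<Rightarrow> (nat \<times> nat) set" where
  "cycle_edges cs = {(cs ! m, cs ! ((m + 1) mod length cs)) | m. m < length cs}"

definition mlambda :: "nat \<Rightarrow> (nat \<Rightarrow> nat \<Rightarrow> real) \<Rightarrow> real" where
  "mlambda n A = (if {cs. is_cycle n A cs} = {} then 0
                  else Max (cycle_mean A ` {cs. is_cycle n A cs}))"

definition critical_cycles :: "nat \<Rightarrow> (nat \<Rightarrow> nat \<Rightarrow> real) \<Rightarrow> nat list set" where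
  "critical_cycles n A = {cs. is_cycle n A cs \<and> cycle_mean A cs = mlambda n A}"

definition crit_nodes :: "nat \<Rightarrow> (nat \<Rightarrow> nat \<Rightarrow> real) \<Rightarrow> nat set" where
  "crit_nodes n A = (\<Union>cs\<in>critical_cycles n A. set cs)"

definition crit_edges :: "nat \<Rightarrow> (nat \<Rightarrow> nat \<Rightarrow> real) \<Rightarrow> (nat \<times> nat) set" where
  "crit_edges n A = (\<Union>cs\<in>critical_cycles n A. cycle_edges cs)"

definition crit_equiv :: "nat \<Rightarrow> (nat \<Rightarrow> nat \<Rightarrow> real) \<Rightarrow> nat \<Rightarrow> nat \<Rightarrow> bool" where
  "crit_equiv n A i j \<longleftrightarrow> i \<in> crit_nodes n A \<and> j \<in> crit_nodes n A \<and>
     (i, j) \<in> (crit_edges n A)\<^sup>* \<and> (j, i) \<in> (crit_edges n A)\<^sup>*"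

definition nonneg_mat :: "nat \<Rightarrow> (nat \<Rightarrow> nat \<Rightarrow> real) \<Rightarrow> bool" where
  "nonneg_mat n A \<longleftrightarrow> (\<forall>i<n. \<forall>j<n. 0 \<le> A i j)"

definition circulant :: "nat \<Rightarrow> (nat \<Rightarrow> nat \<Rightarrow> real) \<Rightarrow> bool" where
  "circulant n A \<longleftrightarrow> (\<exists>a :: nat \<Rightarrow> real. \<forall>i<n. \<forall>j<n. A i j = a (nat ((int j - int i) mod int n)))"

definition mat_le :: "nat \<Rightarrow> (nat \<Rightarrow> nat \<Rightarrow> real) \<Rightarrow> (nat \<Rightarrow> nat \<Rightarrow> real) \<Rightarrow> bool" where
  "mat_le n A B \<longleftrightarrow> (\<forall>i<n. \<forall>j<n. A i j \<le> B i j)"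

definition Attr :: "nat \<Rightarrow> (nat \<Rightarrow> nat \<Rightarrow> real) \<Rightarrow> (nat \<Rightarrow> real) set" where
  "Attr n B = {x. (\<forall>i<n. 0 \<le> x i) \<and>
     (\<exists>t. \<forall>i<n. row_mult n (mpow n B (t + 1)) i x = mlambda n B * row_mult n (mpow n B t) i x)}"

end

theory Submission
  imports Defs "HOL-Number_Theory.Cong"
begin

text \<open>In a circulant matrix every diagonal {(v, v + d mod n)} has constant weight and splits
  into cycles, so all entries are at most \<lambda> and every critical edge lies on a diagonal of weight
  \<lambda>; because A \<le> B and \<lambda>(A) = \<lambda>(B), these diagonals have weight \<lambda> in B as well. Along such a
  diagonal \<tau>, a walk of length at least n revisits the \<tau>-orbit of one of its nodes, so an optimal
  walk can be rerouted to start with a \<tau>-step: (B^(s+1) x)_i = \<lambda> (B^s x)_(i+\<tau>) for s \<ge> n - 1.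
  Hence B^(N+1) x = \<lambda> B^N x exactly when the rows of B^N x agree along the \<lambda>-diagonals, and for x
  in the attraction space this agreement is forced by comparing B^(N+nt) x with B^(N+nt+1) x. The
  critical classes of A are generated by its \<lambda>-diagonals, which gives both directions for N = n^2.\<close>

section \<open>Max-algebraic powers and walks\<close>

lemma mpow_Suc_ge:
  assumes "l < n"
  shows "M i l * mpow n M k l j \<le> mpow n M (Suc k) i j"
  using assms by (auto simp: mmult_def intro!: Max_ge)

lemma mpow_Suc_attained:
  assumes "n > 0"
  obtains l where "l < n" "mpow n M (Suc k) i j = M i l * mpow n M k l j"
proof -
  have "finite ((\<lambda>l. M i l * mpow n M k l j) ` {0..<n})"
    "(\<lambda>l. M i l * mpow n M k l j) ` {0..<n} \<noteq> {}"
    using assms by auto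
  from Max_in[OF this] show thesis
    using that by (auto simp: mmult_def)
qed

lemma mpow_nonneg:
  assumes "nonneg_mat n M" and "i < n" and "j < n"
  shows "0 \<le> mpow n M k i j"
  using assms(2,3)
proof (induction k arbitrary: i j)
  case 0
  then show ?case by (simp add: mone_def)
next
  case (Suc k)
  have "0 \<le> M i 0 * mpow n M k 0 j"
    using Suc assms(1) by (simp add: nonneg_mat_def)
  also have "\<dots> \<le> mpow n M (Suc k) i j"
    using Suc by (intro mpow_Suc_ge) auto
  finally show ?case .
qed

lemma prod_walk_le_mpow:
  assumes nn: "nonneg_mat n M" and w: "\<forall>m\<le>k. w m < n"
  shows "(\<Prod>m<k. M (w m) (w (Suc m))) \<le> mpow n M k (w 0) (w k)"
  using w
proof (induction k arbitrary: w)
  case 0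
  then show ?case by (simp add: mone_def)
next
  case (Suc k)
  have IH: "(\<Prod>m<k. M (w (Suc m)) (w (Suc (Suc m)))) \<le> mpow n M k (w 1) (w (Suc k))"
    using Suc.IH[of "\<lambda>m. w (Suc m)"] Suc.prems by simp
  have "(\<Prod>m<Suc k. M (w m) (w (Suc m)))
      = M (w 0) (w 1) * (\<Prod>m<k. M (w (Suc m)) (w (Suc (Suc m))))"
    by (subst prod.lessThan_Suc_shift) simp
  also have "\<dots> \<le> M (w 0) (w 1) * mpow n M k (w 1) (w (Suc k))"
    using IH nn Suc.prems by (intro mult_left_mono) (auto simp: nonneg_mat_def)
  also have "\<dots> \<le> mpow n M (Suc k) (w 0) (w (Suc k))"
    using Suc.prems by (intro mpow_Suc_ge) auto
  finally show ?case .
qed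

lemma prod_walk_interval_le_mpow:
  assumes "nonneg_mat n M" and "\<forall>m\<le>b. w m < n" and "a \<le> b"
  shows "(\<Prod>m\<in>{a..<b}. M (w m) (w (Suc m))) \<le> mpow n M (b - a) (w a) (w b)"
proof -
  have "(\<Prod>m\<in>{a..<b}. M (w m) (w (Suc m))) = (\<Prod>m<b - a. M (w (a + m)) (w (a + Suc m)))"
    by (subst prod.atLeastLessThan_shift_0) (simp add: atLeast0LessThan)
  also have "\<dots> \<le> mpow n M (b - a) (w (a + 0)) (w (a + (b - a)))"
    using prod_walk_le_mpow[OF assms(1), of "b - a" "\<lambda>m. w (a + m)"] assms(2,3) by auto
  finally show ?thesis using assms(3) by simp
qed

lemma mpow_attained_by_walk:
  assumes "i < n"
  shows "mpow n M k i j = 0 \<or> (\<exists>w. w 0 = i \<and> w k = j \<and> (\<forall>m\<le>k. w m < n) \<and>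
           mpow n M k i j = (\<Prod>m<k. M (w m) (w (Suc m))))"
  using assms
proof (induction k arbitrary: i)
  case 0
  then show ?case
  proof (cases "i = j")
    case True
    then show ?thesis using 0 by (intro disjI2 exI[of _ "\<lambda>_. i"]) (auto simp: mone_def)
  qed (simp add: mone_def)
next
  case (Suc k)
  obtain l where l: "l < n" "mpow n M (Suc k) i j = M i l * mpow n M k l j"
    using mpow_Suc_attained[of n M k i j] Suc.prems by (metis less_nat_zero_code neq0_conv)
  from Suc.IH[OF l(1)] show ?case
  proof
    assume "mpow n M k l j = 0"
    then show ?thesis using l by simp
  next
    assume "\<exists>w. w 0 = l \<and> w k = j \<and> (\<forall>m\<le>k. w m < n) \<and>
              mpow n M k l j = (\<Prod>m<k. M (w m) (w (Suc m)))"
    then obtain w where w: "w 0 = l" "w k = j" "\<forall>m\<le>k. w m < n"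
      "mpow n M k l j = (\<Prod>m<k. M (w m) (w (Suc m)))"
      by blast
    define w' where "w' m = (if m = 0 then i else w (m - 1))" for m
    have "w' 0 = i" "w' (Suc k) = j" "\<forall>m\<le>Suc k. w' m < n"
      using w Suc.prems by (auto simp: w'_def)
    moreover have "mpow n M (Suc k) i j = (\<Prod>m<Suc k. M (w' m) (w' (Suc m)))"
      using l w by (subst prod.lessThan_Suc_shift) (simp add: w'_def)
    ultimately show ?thesis by blast
  qed
qed

lemma mpow_mult_le_mpow_add:
  assumes nn: "nonneg_mat n M" and "i < n" "k < n" "j < n"
  shows "mpow n M a i k * mpow n M b k j \<le> mpow n M (a + b) i j"
  using assms(2)
proof (induction a arbitrary: i)
  case 0
  then show ?case using mpow_nonneg[OF nn] assms by (auto simp: mone_def)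
next
  case (Suc a)
  obtain l where l: "l < n" "mpow n M (Suc a) i k = M i l * mpow n M a l k"
    using mpow_Suc_attained[of n M a i k] assms by (metis less_nat_zero_code neq0_conv)
  have "mpow n M (Suc a) i k * mpow n M b k j = M i l * (mpow n M a l k * mpow n M b k j)"
    using l by simp
  also have "\<dots> \<le> M i l * mpow n M (a + b) l j"
    using Suc.IH[OF l(1)] nn Suc.prems l by (intro mult_left_mono) (auto simp: nonneg_mat_def)
  also have "\<dots> \<le> mpow n M (Suc (a + b)) i j"
    using l by (intro mpow_Suc_ge)
  finally show ?case by simp
qed

lemma power_le_mpow_along_shift:
  assumes "\<forall>i<n. M i ((i + \<tau>) mod n) = c" and "0 \<le> c" and "u < n"
  shows "c ^ m \<le> mpow n M m u ((u + m * \<tau>) mod n)"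
  using assms(3)
proof (induction m arbitrary: u)
  case 0
  then show ?case by (simp add: mone_def)
next
  case (Suc m)
  have n0: "n > 0" using Suc.prems by simp
  have eq: "((u + \<tau>) mod n + m * \<tau>) mod n = (u + Suc m * \<tau>) mod n"
    by (simp add: mod_add_left_eq add.assoc)
  have "c ^ Suc m = M u ((u + \<tau>) mod n) * c ^ m"
    using assms Suc.prems by simp
  also have "\<dots> \<le> M u ((u + \<tau>) mod n) * mpow n M m ((u + \<tau>) mod n) (((u + \<tau>) mod n + m * \<tau>) mod n)"
    using Suc.IH[of "(u + \<tau>) mod n"] assms Suc.prems n0 by (intro mult_left_mono) auto
  also have "\<dots> \<le> mpow n M (Suc m) u ((u + Suc m * \<tau>) mod n)"
    unfolding eq using n0 by (intro mpow_Suc_ge) auto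
  finally show ?case .
qed

section \<open>Powers of a matrix with a heaviest constant diagonal\<close>

lemma walk_meets_shift_orbit:
  fixes w :: "nat \<Rightarrow> nat"
  assumes tn: "\<tau> < n" and ns: "n \<le> k" and wn: "\<forall>m\<le>k. w m < n"
  obtains p q where "p < q" "q \<le> k" "w q = (w p + (q - p) * \<tau>) mod n"
proof -
  define y where "y m = (w m + m * (n - \<tau>)) mod n" for m
  have "\<not> inj_on y {0..k}"
  proof
    assume "inj_on y {0..k}"
    then have "card (y ` {0..k}) = Suc k" by (simp add: card_image)
    moreover have "card (y ` {0..k}) \<le> card {0..<n}"
      using tn by (intro card_mono) (auto simp: y_def)
    ultimately show False using ns by simp
  qed
  then obtain p q where pq: "p < q" "q \<le> k" "y p = y q"
    unfolding inj_on_def by (metis atLeastAtMost_iff linorder_neqE_nat)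
  have e: "w p + (q - p) * \<tau> + q * (n - \<tau>) = (w p + p * (n - \<tau>)) + (q - p) * n"
  proof -
    have "q * (n - \<tau>) = p * (n - \<tau>) + (q - p) * (n - \<tau>)"
      using pq by (metis add_mult_distrib le_add_diff_inverse less_imp_le)
    moreover have "(q - p) * \<tau> + (q - p) * (n - \<tau>) = (q - p) * n"
      using tn by (simp add: add_mult_distrib2[symmetric])
    ultimately show ?thesis by simp
  qed
  have "(w p + (q - p) * \<tau> + q * (n - \<tau>)) mod n = (w q + q * (n - \<tau>)) mod n"
    unfolding e using pq(3) by (simp add: y_def)
  then have "(w p + (q - p) * \<tau>) mod n = w q mod n"
    using cong_add_rcancel_nat unfolding cong_def by blast
  then show thesis
    using that pq wn by simp
qed

context
  fixes n :: nat and M :: "nat \<Rightarrow> nat \<Rightarrow> real" and c :: real and \<tau> :: nat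
  assumes nn: "nonneg_mat n M" and tn: "\<tau> < n"
    and le: "\<forall>i<n. \<forall>j<n. M i j \<le> c"
    and diag: "\<forall>i<n. M i ((i + \<tau>) mod n) = c"
    and sh: "\<forall>i<n. \<forall>j<n. M ((i + \<tau>) mod n) ((j + \<tau>) mod n) = M i j"
begin

lemma diag_weight_nonneg: "0 \<le> c"
proof -
  have "M 0 ((0 + \<tau>) mod n) = c" "0 \<le> M 0 ((0 + \<tau>) mod n)"
    using diag nn tn by (auto simp: nonneg_mat_def)
  then show ?thesis by simp
qed

lemma prod_walk_le_mpow_shifted:
  assumes "\<forall>m\<le>p. w m < n"
  shows "(\<Prod>m<p. M (w m) (w (Suc m))) \<le> mpow n M p ((w 0 + \<tau>) mod n) ((w p + \<tau>) mod n)"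
proof -
  have "(\<Prod>m<p. M (w m) (w (Suc m))) = (\<Prod>m<p. M ((w m + \<tau>) mod n) ((w (Suc m) + \<tau>) mod n))"
    using assms sh by (intro prod.cong) auto
  also have "\<dots> \<le> mpow n M p ((w 0 + \<tau>) mod n) ((w p + \<tau>) mod n)"
    using tn by (intro prod_walk_le_mpow[OF nn, of p "\<lambda>m. (w m + \<tau>) mod n", simplified]) auto
  finally show ?thesis .
qed

lemma prod_walk_orbit_segment_le:
  assumes wn: "\<forall>m\<le>q. w m < n" and pq: "p < q" and wq: "w q = (w p + (q - p) * \<tau>) mod n"
  shows "(\<Prod>m\<in>{p..<q}. M (w m) (w (Suc m))) \<le> c * mpow n M (q - p - 1) ((w p + \<tau>) mod n) (w q)"
proof -
  define u where "u = (w p + \<tau>) mod n"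
  have c0: "0 \<le> c" by (rule diag_weight_nonneg)
  have "(\<Prod>m\<in>{p..<q}. M (w m) (w (Suc m))) \<le> (\<Prod>m\<in>{p..<q}. c)"
    using wn le nn by (intro prod_mono) (auto simp: nonneg_mat_def)
  also have "\<dots> = c * c ^ (q - p - 1)"
    using pq by (metis Suc_diff_Suc card_atLeastLessThan diff_Suc_1 power_Suc prod_constant zero_less_diff)
  also have "(u + (q - p - 1) * \<tau>) mod n = w q"
  proof -
    have "(u + (q - p - 1) * \<tau>) mod n = (w p + (\<tau> + (q - p - 1) * \<tau>)) mod n"
      by (simp add: u_def mod_add_left_eq add.assoc)
    also have "\<tau> + (q - p - 1) * \<tau> = (q - p) * \<tau>"
      using pq by (metis Suc_diff_Suc diff_Suc_1 mult_Suc zero_less_diff)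
    finally show ?thesis using wq by simp
  qed
  then have "c ^ (q - p - 1) \<le> mpow n M (q - p - 1) u (w q)"
    using power_le_mpow_along_shift[of n M \<tau> c u "q - p - 1"] diag c0 tn by (simp add: u_def)
  finally show ?thesis using c0 by (simp add: mult_left_mono u_def)
qed

text \<open>Rerouting: a c-edge i \<rightarrow> i + \<tau>, the prefix up to p shifted by \<tau>, then q - p - 1 c-edges
  along the \<tau>-orbit to w q, then the original suffix. The dropped segment p..q weighs at most
  c^(q-p).\<close>
lemma prod_walk_le_mpow_Suc_shift:
  assumes wn: "\<forall>m\<le>Suc s. w m < n" and pq: "p < q" "q \<le> Suc s"
    and wq: "w q = (w p + (q - p) * \<tau>) mod n"
  shows "(\<Prod>m<Suc s. M (w m) (w (Suc m))) \<le> c * mpow n M s ((w 0 + \<tau>) mod n) (w (Suc s))"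
proof -
  define f where "f m = M (w m) (w (Suc m))" for m
  define u where "u = (w p + \<tau>) mod n"
  have c0: "0 \<le> c" by (rule diag_weight_nonneg)
  have fnn: "0 \<le> f m" if "m \<le> s" for m
    using nn wn that by (simp add: f_def nonneg_mat_def)
  have un: "u < n" using tn by (simp add: u_def)
  have w0n: "(w 0 + \<tau>) mod n < n" and wqn: "w q < n" and wsn: "w (Suc s) < n"
    using tn wn pq by auto
  let ?X1 = "mpow n M p ((w 0 + \<tau>) mod n) u"
  let ?X2 = "mpow n M (q - p - 1) u (w q)"
  let ?X3 = "mpow n M (Suc s - q) (w q) (w (Suc s))"
  have X1: "prod f {0..<p} \<le> ?X1"
    unfolding f_def u_def lessThan_atLeast0[symmetric]
    using wn pq by (intro prod_walk_le_mpow_shifted) auto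
  have X2: "prod f {p..<q} \<le> c * ?X2"
    unfolding f_def u_def using wn pq wq by (intro prod_walk_orbit_segment_le) auto
  have X3: "prod f {q..<Suc s} \<le> ?X3"
    unfolding f_def using wn pq by (intro prod_walk_interval_le_mpow[OF nn]) auto
  have "(\<Prod>m<Suc s. M (w m) (w (Suc m))) = prod f {0..<p} * prod f {p..<q} * prod f {q..<Suc s}"
    unfolding f_def[symmetric] lessThan_atLeast0 using pq
    by (simp only: prod.atLeastLessThan_concat[of 0 p q] prod.atLeastLessThan_concat[of 0 q "Suc s"]
        zero_le less_imp_le)
  also have "\<dots> \<le> ?X1 * (c * ?X2) * ?X3"
    using X1 X2 X3 fnn pq c0 mpow_nonneg[OF nn w0n un] mpow_nonneg[OF nn un wqn]
    by (intro mult_mono prod_nonneg mult_nonneg_nonneg) auto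
  also have "\<dots> = c * (?X1 * ?X2 * ?X3)" by simp
  also have "?X1 * ?X2 * ?X3 \<le> mpow n M (p + (q - p - 1)) ((w 0 + \<tau>) mod n) (w q) * ?X3"
    using mpow_mult_le_mpow_add[OF nn w0n un wqn] mpow_nonneg[OF nn wqn wsn]
    by (intro mult_right_mono)
  also have "\<dots> \<le> mpow n M s ((w 0 + \<tau>) mod n) (w (Suc s))"
    using mpow_mult_le_mpow_add[OF nn w0n wqn wsn, of "p + (q - p - 1)" "Suc s - q"] pq by simp
  finally show ?thesis using c0 by (simp add: mult_left_mono)
qed

text \<open>Beyond n-1 steps, an optimal walk can always begin with a c-edge along \<tau>.\<close>
lemma mpow_Suc_eq_diag_shift:
  assumes ns: "n \<le> Suc s" and i: "i < n" and j: "j < n"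
  shows "mpow n M (Suc s) i j = c * mpow n M s ((i + \<tau>) mod n) j"
proof (rule antisym)
  show "c * mpow n M s ((i + \<tau>) mod n) j \<le> mpow n M (Suc s) i j"
    using mpow_Suc_ge[of "(i + \<tau>) mod n" n M i s j] diag i by simp
next
  from mpow_attained_by_walk[OF i, of M "Suc s" j]
  show "mpow n M (Suc s) i j \<le> c * mpow n M s ((i + \<tau>) mod n) j"
  proof
    assume "mpow n M (Suc s) i j = 0"
    then show ?thesis
      using diag_weight_nonneg mpow_nonneg[OF nn _ j, of "(i + \<tau>) mod n" s] i by simp
  next
    assume "\<exists>w. w 0 = i \<and> w (Suc s) = j \<and> (\<forall>m\<le>Suc s. w m < n) \<and>
              mpow n M (Suc s) i j = (\<Prod>m<Suc s. M (w m) (w (Suc m)))"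
    then obtain w where "w 0 = i" "w (Suc s) = j" and wn: "\<forall>m\<le>Suc s. w m < n"
      and "mpow n M (Suc s) i j = (\<Prod>m<Suc s. M (w m) (w (Suc m)))"
      by blast
    moreover obtain p q where "p < q" "q \<le> Suc s" "w q = (w p + (q - p) * \<tau>) mod n"
      using walk_meets_shift_orbit[OF tn ns wn] by blast
    ultimately show ?thesis
      using prod_walk_le_mpow_Suc_shift[OF wn] by metis
  qed
qed

lemma row_mult_mpow_Suc_eq_diag_shift:
  assumes "n \<le> Suc s" and "i < n"
  shows "row_mult n (mpow n M (Suc s)) i x = c * row_mult n (mpow n M s) ((i + \<tau>) mod n) x"
proof -
  have "row_mult n (mpow n M (Suc s)) i x
      = Max ((\<lambda>y. c * y) ` ((\<lambda>k. mpow n M s ((i + \<tau>) mod n) k * x k) ` {0..<n}))"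
    unfolding row_mult_def image_image using mpow_Suc_eq_diag_shift[OF assms]
    by (intro arg_cong[where f = Max] image_cong) auto
  also have "\<dots> = c * row_mult n (mpow n M s) ((i + \<tau>) mod n) x"
    unfolding row_mult_def using diag_weight_nonneg assms
    by (intro mono_Max_commute[symmetric]) (auto intro!: monoI mult_left_mono)
  finally show ?thesis .
qed

end

section \<open>Circulant matrices and their critical digraph\<close>

lemma circulant_entry_eq:
  assumes "circulant n M" "i < n" "j < n" "i' < n" "j' < n"
    and "(int j - int i) mod int n = (int j' - int i') mod int n"
  shows "M i j = M i' j'"
  using assms unfolding circulant_def by metis

lemma circulant_shift:
  assumes "circulant n M" "i < n" "j < n"
  shows "M ((i + t) mod n) ((j + t) mod n) = M i j"
proof (rule circulant_entry_eq[OF assms(1)])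
  show "(int ((j + t) mod n) - int ((i + t) mod n)) mod int n = (int j - int i) mod int n"
    by (simp add: zmod_int mod_diff_eq)
qed (use assms in auto)

text \<open>The entry M u v sits on the diagonal of shift (v - u) mod n, written with n added to
  avoid truncated subtraction.\<close>
lemma circulant_diag_const:
  assumes "circulant n M" "u < n" "v < n" "w < n"
  shows "M w ((w + (v + n - u) mod n) mod n) = M u v"
proof (rule circulant_entry_eq[OF assms(1)])
  have "(int ((w + (v + n - u) mod n) mod n) - int w) mod int n
      = (int w + (int v + int n - int u) - int w) mod int n"
    using assms by (simp add: zmod_int mod_diff_left_eq mod_add_right_eq of_nat_diff add_diff_eq)
  also have "\<dots> = (int v - int u) mod int n"
  proof -
    have "int w + (int v + int n - int u) - int w = (int v - int u) + int n" by simp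
    then show ?thesis by (simp only: mod_add_self2)
  qed
  finally show "(int ((w + (v + n - u) mod n) mod n) - int w) mod int n = (int v - int u) mod int n" .
qed (use assms in auto)

lemma finite_cycles: "finite {cs. is_cycle n M cs}"
proof (rule finite_subset)
  show "{cs. is_cycle n M cs} \<subseteq> {xs. set xs \<subseteq> {0..<n} \<and> length xs \<le> n}"
  proof safe
    fix cs assume c: "is_cycle n M cs"
    then show "\<And>x. x \<in> set cs \<Longrightarrow> x \<in> {0..<n}" by (auto simp: is_cycle_def)
    have "length cs = card (set cs)" using c by (simp add: is_cycle_def distinct_card)
    also have "\<dots> \<le> card {0..<n}" using c by (intro card_mono) (auto simp: is_cycle_def)
    finally show "length cs \<le> n" by simp
  qed
qed (rule finite_lists_length_le, simp)

lemma cycle_mean_nonneg: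
  assumes "is_cycle n M cs"
  shows "0 \<le> cycle_mean M cs"
proof -
  have "0 \<le> cycle_weight M cs" unfolding cycle_weight_def
    using assms by (intro prod_nonneg) (auto simp: is_cycle_def less_imp_le)
  then show ?thesis unfolding cycle_mean_def by (rule real_root_ge_zero)
qed

lemma cycle_mean_le_mlambda:
  assumes "is_cycle n M cs"
  shows "cycle_mean M cs \<le> mlambda n M"
  using assms finite_cycles[of n M] by (auto simp: mlambda_def intro!: Max_ge)

lemma mlambda_nonneg: "0 \<le> mlambda n M"
proof (cases "{cs. is_cycle n M cs} = {}")
  case True
  then show ?thesis by (simp add: mlambda_def)
next
  case False
  then obtain cs where "is_cycle n M cs" by auto
  then show ?thesis using cycle_mean_nonneg cycle_mean_le_mlambda order_trans by blast
qed

lemma mlambda_attained: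
  assumes "mlambda n M \<noteq> 0"
  obtains cs where "cs \<in> critical_cycles n M"
proof -
  have ne: "{cs. is_cycle n M cs} \<noteq> {}"
    using assms unfolding mlambda_def by force
  have "mlambda n M \<in> cycle_mean M ` {cs. is_cycle n M cs}"
    unfolding mlambda_def using ne finite_cycles[of n M] by (simp add: Max_in)
  then show thesis using that by (auto simp: critical_cycles_def)
qed

lemma inj_on_shift_orbit:
  fixes n u d L :: nat
  assumes Lmin: "\<And>k. 0 < k \<Longrightarrow> k < L \<Longrightarrow> (k * d) mod n \<noteq> 0"
  shows "inj_on (\<lambda>m. (u + m * d) mod n) {0..<L}"
proof (rule linorder_inj_onI')
  fix a b assume ab: "a \<in> {0..<L}" "b \<in> {0..<L}" "a < b"
  show "(u + a * d) mod n \<noteq> (u + b * d) mod n"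
  proof
    assume "(u + a * d) mod n = (u + b * d) mod n"
    moreover have "u + b * d = (u + a * d) + (b - a) * d"
    proof -
      have "b * d = (a + (b - a)) * d" using ab by simp
      then show ?thesis by (simp only: add_mult_distrib add.assoc)
    qed
    ultimately have "[(u + a * d) + 0 = (u + a * d) + (b - a) * d] (mod n)"
      by (simp add: cong_def)
    then have "((b - a) * d) mod n = 0"
      by (metis cong_add_lcancel_nat cong_def mod_0)
    moreover have "0 < b - a" "b - a < L" using ab by auto
    ultimately show False using Lmin[of "b - a"] by simp
  qed
qed

lemma shift_orbit_list:
  fixes n u d :: nat
  assumes n0: "n > 0" and u: "u < n"
  obtains cs where "cs \<noteq> []" "distinct cs" "set cs \<subseteq> {0..<n}" "cs ! 0 = u"
    "\<forall>m<length cs. cs ! ((m + 1) mod length cs) = (cs ! m + d) mod n"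
proof -
  define L where "L = (LEAST L. 0 < L \<and> (L * d) mod n = 0)"
  have L: "0 < L" "(L * d) mod n = 0"
    using LeastI[of "\<lambda>L. 0 < L \<and> (L * d) mod n = 0" n] n0 by (auto simp: L_def)
  have Lmin: "(k * d) mod n \<noteq> 0" if "0 < k" "k < L" for k
    using not_less_Least[of k "\<lambda>L. 0 < L \<and> (L * d) mod n = 0"] that by (auto simp: L_def)
  define cs where "cs = map (\<lambda>m. (u + m * d) mod n) [0..<L]"
  have nth: "cs ! m = (u + m * d) mod n" if "m < L" for m
    using that by (simp add: cs_def)
  have "inj_on (\<lambda>m. (u + m * d) mod n) {0..<L}"
    using Lmin by (intro inj_on_shift_orbit) blast
  then have "distinct cs" by (simp add: cs_def distinct_map)
  moreover have "cs ! ((m + 1) mod length cs) = (cs ! m + d) mod n" if "m < length cs" for m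
  proof (cases "m + 1 < L")
    case True
    then show ?thesis using that by (simp add: cs_def nth algebra_simps mod_add_right_eq)
  next
    case False
    then have mL: "m + 1 = L" using that by (simp add: cs_def)
    have "(cs ! m + d) mod n = (u + m * d + d) mod n"
      using mL by (simp add: nth mod_add_left_eq)
    also have "u + m * d + d = u + L * d" by (simp flip: mL add: algebra_simps)
    also have "(u + L * d) mod n = u" using L u by (metis add.right_neutral mod_add_right_eq mod_less)
    finally show ?thesis using mL L nth[of 0] u by (simp add: cs_def)
  qed
  moreover have "cs \<noteq> []" "set cs \<subseteq> {0..<n}" "cs ! 0 = u"
    using L n0 u nth[of 0] by (auto simp: cs_def)
  ultimately show thesis using that by blast
qed

lemma diag_shift_cycle:
  assumes n0: "n > 0" and c0: "c > 0" and u: "u < n"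
    and d: "\<forall>v<n. M v ((v + d) mod n) = c"
  obtains cs where "is_cycle n M cs" "cycle_mean M cs = c" "u \<in> set cs"
    "(u, (u + d) mod n) \<in> cycle_edges cs"
proof -
  obtain cs where cs: "cs \<noteq> []" "distinct cs" "set cs \<subseteq> {0..<n}" "cs ! 0 = u"
    and next_eq: "\<forall>m<length cs. cs ! ((m + 1) mod length cs) = (cs ! m + d) mod n"
    using shift_orbit_list[OF n0 u] by blast
  have edge: "M (cs ! m) (cs ! ((m + 1) mod length cs)) = c" if "m < length cs" for m
  proof -
    have "cs ! m < n" using cs(3) nth_mem[OF that] by auto
    then show ?thesis using next_eq d that by simp
  qed
  have "is_cycle n M cs"
    unfolding is_cycle_def using cs edge c0 by auto
  moreover have "cycle_mean M cs = c"
    using edge cs(1) c0 by (simp add: cycle_mean_def cycle_weight_def real_root_power_cancel)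
  moreover have "u \<in> set cs" "(u, (u + d) mod n) \<in> cycle_edges cs"
    using cs next_eq by (auto simp: cycle_edges_def intro!: exI[of _ 0])
  ultimately show thesis using that by blast
qed

text \<open>A positive entry of a circulant matrix is the weight of every edge of a cycle
  along its diagonal.\<close>
lemma circulant_entry_le_mlambda:
  assumes nn: "nonneg_mat n M" and ci: "circulant n M" and i: "i < n" and j: "j < n"
  shows "M i j \<le> mlambda n M"
proof (cases "M i j = 0")
  case True
  then show ?thesis using mlambda_nonneg by simp
next
  case False
  then have "M i j > 0" using nn i j by (auto simp: nonneg_mat_def less_le)
  moreover have "\<forall>v<n. M v ((v + (j + n - i) mod n) mod n) = M i j"
    using circulant_diag_const[OF ci i j] by blast
  ultimately obtain cs where "is_cycle n M cs" "cycle_mean M cs = M i j"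
    using diag_shift_cycle[of n "M i j" i M] i by blast
  then show ?thesis using cycle_mean_le_mlambda by metis
qed

lemma prod_eq_power_card_imp_eq:
  fixes f :: "'a \<Rightarrow> 'b :: linordered_idom"
  assumes S: "finite S" and f: "\<forall>k\<in>S. 0 < f k \<and> f k \<le> c"
    and P: "prod f S = c ^ card S" and m: "m \<in> S"
  shows "f m = c"
proof -
  have fm: "0 < f m" "f m \<le> c" using f m by auto
  have "card S > 0" using S m card_gt_0_iff by blast
  then have "c ^ (card S - 1) * c = c ^ card S"
    by (metis Suc_diff_1 power_Suc2)
  also have "\<dots> = prod f (S - {m}) * f m"
    using P S m by (simp add: prod.remove mult.commute)
  also have "prod f (S - {m}) \<le> (\<Prod>k\<in>S - {m}. c)"
    using f by (intro prod_mono) (auto simp: less_imp_le)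
  also have "(\<Prod>k\<in>S - {m}. c) = c ^ (card S - 1)"
    using S m by (simp add: card_Diff_singleton)
  finally have "c ^ (card S - 1) * c \<le> c ^ (card S - 1) * f m"
    using fm by (simp add: mult_right_mono)
  then have "c \<le> f m"
    using fm by (simp add: mult_le_cancel_left_pos)
  then show ?thesis using fm by simp
qed

lemma critical_cycle_edge:
  assumes nn: "nonneg_mat n M" and ci: "circulant n M"
    and cs: "cs \<in> critical_cycles n M" and m: "m < length cs"
  shows "M (cs ! m) (cs ! ((m + 1) mod length cs)) = mlambda n M"
proof -
  define f where "f k = M (cs ! k) (cs ! ((k + 1) mod length cs))" for k
  have cyc: "is_cycle n M cs" and mean: "cycle_mean M cs = mlambda n M"
    using cs by (auto simp: critical_cycles_def)
  have f: "\<forall>k\<in>{..<length cs}. 0 < f k \<and> f k \<le> mlambda n M"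
  proof
    fix k assume k: "k \<in> {..<length cs}"
    then have "(k + 1) mod length cs < length cs" by (intro mod_less_divisor) auto
    then have "cs ! k < n" "cs ! ((k + 1) mod length cs) < n"
      using k cyc nth_mem[of k cs] nth_mem[of "(k + 1) mod length cs" cs]
      by (auto simp: is_cycle_def simp del: nth_mem)
    then show "0 < f k \<and> f k \<le> mlambda n M"
      using k cyc circulant_entry_le_mlambda[OF nn ci] by (auto simp: f_def is_cycle_def)
  qed
  have P: "0 \<le> prod f {..<length cs}"
    using f by (intro prod_nonneg) (auto simp: less_imp_le)
  have "mlambda n M ^ card {..<length cs} = root (length cs) (prod f {..<length cs}) ^ length cs"
    using mean by (simp add: cycle_mean_def cycle_weight_def f_def)
  also have "\<dots> = prod f {..<length cs}"
    using m P by (intro real_root_pow_pos2) auto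
  finally have "prod f {..<length cs} = mlambda n M ^ card {..<length cs}" by (rule sym)
  then show ?thesis
    using prod_eq_power_card_imp_eq[OF _ f] m by (simp add: f_def)
qed

lemma circulant_mlambda_diag:
  assumes nn: "nonneg_mat n M" and ci: "circulant n M" and l0: "mlambda n M \<noteq> 0"
  obtains \<tau> where "\<tau> < n" "\<forall>v<n. M v ((v + \<tau>) mod n) = mlambda n M"
proof -
  obtain cs where cs: "cs \<in> critical_cycles n M"
    using mlambda_attained[OF l0] by blast
  define u v where "u = cs ! 0" and "v = cs ! ((0 + 1) mod length cs)"
  have L0: "0 < length cs" using cs by (auto simp: critical_cycles_def is_cycle_def)
  then have "(0 + 1) mod length cs < length cs" by (rule mod_less_divisor)
  then have "u \<in> set cs" "v \<in> set cs" using L0 by (auto simp: u_def v_def simp del: One_nat_def)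
  then have u: "u < n" and v: "v < n" using cs by (auto simp: critical_cycles_def is_cycle_def)
  have "M u v = mlambda n M"
    using critical_cycle_edge[OF nn ci cs L0] by (simp add: u_def v_def)
  then show thesis
    using that[of "(v + n - u) mod n"] circulant_diag_const[OF ci u v] u by auto
qed

lemma crit_equiv_diag_shift:
  assumes lpos: "mlambda n M > 0" and u: "u < n"
    and diag: "\<forall>v<n. M v ((v + \<tau>) mod n) = mlambda n M"
  shows "crit_equiv n M u ((u + \<tau>) mod n)"
proof -
  have n0: "n > 0" using u by simp
  have step: "v \<in> crit_nodes n M \<and> (v, (v + \<tau>) mod n) \<in> crit_edges n M" if v: "v < n" for v
  proof -
    obtain cs where "is_cycle n M cs" "cycle_mean M cs = mlambda n M" "v \<in> set cs"
      "(v, (v + \<tau>) mod n) \<in> cycle_edges cs"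
      using diag_shift_cycle[of n "mlambda n M" v M \<tau>, OF n0 lpos v diag] by blast
    then show ?thesis unfolding crit_nodes_def crit_edges_def critical_cycles_def by blast
  qed
  have path: "(v, (v + k * \<tau>) mod n) \<in> (crit_edges n M)\<^sup>*" if "v < n" for v k
  proof (induction k)
    case 0
    then show ?case using that by simp
  next
    case (Suc k)
    have "((v + k * \<tau>) mod n, ((v + k * \<tau>) mod n + \<tau>) mod n) \<in> crit_edges n M"
      using step[of "(v + k * \<tau>) mod n"] n0 by simp
    moreover have "((v + k * \<tau>) mod n + \<tau>) mod n = (v + Suc k * \<tau>) mod n"
      by (simp add: mod_add_left_eq mod_add_right_eq algebra_simps)
    ultimately show ?case using Suc.IH by (metis rtrancl_into_rtrancl)
  qed
  text \<open>Going around the \<tau>-orbit n-1 more times leads back.\<close>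
  have "\<tau> + (n - 1) * \<tau> = n * \<tau>"
    using n0 by (metis Suc_diff_1 mult_Suc)
  then have "(((u + \<tau>) mod n + (n - 1) * \<tau>) mod n) = (u + n * \<tau>) mod n"
    by (simp add: mod_add_left_eq add.assoc)
  then have "((u + \<tau>) mod n, u) \<in> (crit_edges n M)\<^sup>*"
    using path[of "(u + \<tau>) mod n" "n - 1"] n0 u by simp
  then show ?thesis
    unfolding crit_equiv_def using step[OF u] step[of "(u + \<tau>) mod n"] n0 by auto
qed

lemma mlambda_entry_of_le:
  assumes "mat_le n A B" "nonneg_mat n B" "circulant n B" "mlambda n A = mlambda n B"
    and "i < n" "j < n" "A i j = mlambda n A"
  shows "B i j = mlambda n B"
  using assms circulant_entry_le_mlambda[of n B i j] by (force simp: mat_le_def)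

section \<open>Rows of powers and the attraction space\<close>

lemma row_mult_mpow_Suc:
  assumes nn: "nonneg_mat n M" and x: "\<forall>k<n. 0 \<le> x k" and i: "i < n"
  shows "row_mult n (mpow n M (Suc s)) i x = Max ((\<lambda>l. M i l * row_mult n (mpow n M s) l x) ` {0..<n})"
proof (rule antisym)
  have n0: "n > 0" using i by simp
  show "row_mult n (mpow n M (Suc s)) i x \<le> Max ((\<lambda>l. M i l * row_mult n (mpow n M s) l x) ` {0..<n})"
    unfolding row_mult_def[of n "mpow n M (Suc s)"]
  proof (subst Max_le_iff, safe)
    fix j assume j: "j \<in> {0..<n}"
    obtain l where l: "l < n" "mpow n M (Suc s) i j = M i l * mpow n M s l j"
      using mpow_Suc_attained[OF n0] by blast
    have "mpow n M s l j * x j \<le> row_mult n (mpow n M s) l x"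
      unfolding row_mult_def using j by (intro Max_ge) auto
    then have "mpow n M (Suc s) i j * x j \<le> M i l * row_mult n (mpow n M s) l x"
      using l nn i by (simp add: mult.assoc mult_left_mono nonneg_mat_def)
    also have "\<dots> \<le> Max ((\<lambda>l. M i l * row_mult n (mpow n M s) l x) ` {0..<n})"
      using l by (intro Max_ge) auto
    finally show "mpow n M (Suc s) i j * x j \<le> Max ((\<lambda>l. M i l * row_mult n (mpow n M s) l x) ` {0..<n})" .
  qed (use n0 in auto)
  show "Max ((\<lambda>l. M i l * row_mult n (mpow n M s) l x) ` {0..<n}) \<le> row_mult n (mpow n M (Suc s)) i x"
  proof (subst Max_le_iff, safe)
    fix l assume l: "l \<in> {0..<n}"
    have "finite ((\<lambda>k. mpow n M s l k * x k) ` {0..<n})" "(\<lambda>k. mpow n M s l k * x k) ` {0..<n} \<noteq> {}"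
      using n0 by auto
    from Max_in[OF this] obtain j where j: "j < n" "row_mult n (mpow n M s) l x = mpow n M s l j * x j"
      by (auto simp: row_mult_def)
    have "M i l * row_mult n (mpow n M s) l x = (M i l * mpow n M s l j) * x j" using j by simp
    also have "\<dots> \<le> mpow n M (Suc s) i j * x j"
      using mpow_Suc_ge[of l n M i s j] l x j by (intro mult_right_mono) auto
    also have "\<dots> \<le> row_mult n (mpow n M (Suc s)) i x"
      unfolding row_mult_def using j by (intro Max_ge) auto
    finally show "M i l * row_mult n (mpow n M s) l x \<le> row_mult n (mpow n M (Suc s)) i x" .
  qed (use n0 in auto)
qed

lemma row_mult_mpow_geometric_from:
  assumes nn: "nonneg_mat n M" and x: "\<forall>k<n. 0 \<le> x k" and c0: "0 \<le> c"
    and t: "\<forall>i<n. row_mult n (mpow n M (Suc t)) i x = c * row_mult n (mpow n M t) i x"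
    and ts: "t \<le> s" and i: "i < n"
  shows "row_mult n (mpow n M (Suc s)) i x = c * row_mult n (mpow n M s) i x"
  using ts i
proof (induction s arbitrary: i rule: dec_induct)
  case base
  then show ?case using t by blast
next
  case (step s)
  have "row_mult n (mpow n M (Suc (Suc s))) i x
      = Max ((\<lambda>y. c * y) ` ((\<lambda>l. M i l * row_mult n (mpow n M s) l x) ` {0..<n}))"
    unfolding row_mult_mpow_Suc[OF nn x step.prems] image_image
    by (intro arg_cong[where f = Max] image_cong) (auto simp: step.IH simp del: mpow.simps)
  also have "\<dots> = c * row_mult n (mpow n M (Suc s)) i x"
    unfolding row_mult_mpow_Suc[OF nn x step.prems] using c0 step.prems
    by (intro mono_Max_commute[symmetric]) (auto intro!: monoI mult_left_mono)
  finally show ?case .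
qed

lemma circulant_row_mult_mpow_Suc:
  assumes nn: "nonneg_mat n M" and ci: "circulant n M" and tn: "\<tau> < n"
    and diag: "\<forall>v<n. M v ((v + \<tau>) mod n) = mlambda n M" and "n \<le> Suc s" and "i < n"
  shows "row_mult n (mpow n M (Suc s)) i x
       = mlambda n M * row_mult n (mpow n M s) ((i + \<tau>) mod n) x"
  using assms circulant_entry_le_mlambda[OF nn ci] circulant_shift[OF ci]
  by (intro row_mult_mpow_Suc_eq_diag_shift) auto

text \<open>On the attraction space the rows of M^N are constant along a diagonal of weight
  \<lambda>(M): n t further steps along that diagonal return every row to itself, and after
  t steps the sequence is already geometric.\<close>
lemma attr_row_mult_mpow_diag_invariant:
  assumes nn: "nonneg_mat n M" and ci: "circulant n M" and lpos: "0 < mlambda n M"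
    and tn: "\<tau> < n" and diag: "\<forall>v<n. M v ((v + \<tau>) mod n) = mlambda n M"
    and x: "x \<in> Attr n M" and nN: "n \<le> Suc N" and i: "i < n"
  shows "row_mult n (mpow n M N) ((i + \<tau>) mod n) x = row_mult n (mpow n M N) i x"
proof -
  define lam where "lam = mlambda n M"
  define V where "V s j = row_mult n (mpow n M s) j x" for s j
  have n0: "n > 0" using i by simp
  have step: "V (Suc s) j = lam * V s ((j + \<tau>) mod n)" if "N \<le> s" "j < n" for s j
    using circulant_row_mult_mpow_Suc[OF nn ci tn diag, of s j x] nN that
    by (simp add: V_def lam_def)
  have iter: "V (N + k) j = lam ^ k * V N ((j + k * \<tau>) mod n)" if "j < n" for k j
    using that
  proof (induction k arbitrary: j)
    case (Suc k)
    have "V (N + Suc k) j = lam * (lam ^ k * V N (((j + \<tau>) mod n + k * \<tau>) mod n))"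
      using step[of "N + k" j] Suc n0 by simp
    also have "((j + \<tau>) mod n + k * \<tau>) mod n = (j + Suc k * \<tau>) mod n"
      by (simp add: mod_add_left_eq add.assoc)
    finally show ?case by simp
  qed simp
  obtain t where t: "\<forall>j<n. V (Suc t) j = lam * V t j"
    using x by (auto simp: Attr_def V_def lam_def)
  define S where "S = N + n * t"
  have "lam * V S ((i + \<tau>) mod n) = V (Suc S) i"
    using step[of S i] i by (simp add: S_def)
  also have "\<dots> = lam * V S i"
    using row_mult_mpow_geometric_from[OF nn _ _ t[unfolded V_def], of S i] x lpos n0 i
    by (simp add: V_def S_def lam_def Attr_def trans_le_add2)
  finally have "V S ((i + \<tau>) mod n) = V S i"
    using lpos by (simp add: lam_def)
  moreover have "V S j = lam ^ (n * t) * V N j" if "j < n" for j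
    using iter[of j "n * t"] that by (simp add: S_def mult.assoc)
  ultimately show ?thesis
    using i n0 lpos by (simp add: V_def lam_def)
qed

lemma attr_if_row_mult_mpow_diag_invariant:
  assumes nn: "nonneg_mat n M" and ci: "circulant n M" and tn: "\<tau> < n"
    and diag: "\<forall>v<n. M v ((v + \<tau>) mod n) = mlambda n M" and nN: "n \<le> Suc N"
    and x: "\<forall>i<n. 0 \<le> x i"
    and inv: "\<forall>i<n. row_mult n (mpow n M N) ((i + \<tau>) mod n) x = row_mult n (mpow n M N) i x"
  shows "x \<in> Attr n M"
proof -
  have "row_mult n (mpow n M (N + 1)) i x = mlambda n M * row_mult n (mpow n M N) i x"
    if "i < n" for i
    using circulant_row_mult_mpow_Suc[OF nn ci tn diag nN that] inv that by simp
  then show ?thesis using x by (auto simp: Attr_def)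
qed

lemma crit_edge_diag_shift:
  assumes nnA: "nonneg_mat n A" and ciA: "circulant n A"
    and nnB: "nonneg_mat n B" and ciB: "circulant n B"
    and le: "mat_le n A B" and lam: "mlambda n A = mlambda n B"
    and ab: "(a, b) \<in> crit_edges n A"
  obtains d where "a < n" "d < n" "(a + d) mod n = b" "\<forall>v<n. B v ((v + d) mod n) = mlambda n B"
proof -
  from ab obtain cs m where cs: "cs \<in> critical_cycles n A" and m: "m < length cs"
    and a: "a = cs ! m" and b: "b = cs ! ((m + 1) mod length cs)"
    unfolding crit_edges_def cycle_edges_def by blast
  have "(m + 1) mod length cs < length cs" using m by (intro mod_less_divisor) linarith
  then have "a \<in> set cs" "b \<in> set cs" using m a b by simp_all
  moreover have "set cs \<subseteq> {0..<n}" using cs by (simp add: critical_cycles_def is_cycle_def)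
  ultimately have an: "a < n" and bn: "b < n" by auto
  have "B a b = mlambda n B"
    using mlambda_entry_of_le[OF le nnB ciB lam an bn] critical_cycle_edge[OF nnA ciA cs m] a b
    by simp
  moreover have "(a + (b + n - a) mod n) mod n = b"
    using an bn by (simp add: mod_add_right_eq)
  ultimately show thesis
    using that[of "(b + n - a) mod n"] circulant_diag_const[OF ciB an bn] an by simp
qed

lemma attr_row_mult_mpow_eq_if_crit_equiv:
  assumes nnA: "nonneg_mat n A" and ciA: "circulant n A"
    and nnB: "nonneg_mat n B" and ciB: "circulant n B"
    and le: "mat_le n A B" and lam: "mlambda n A = mlambda n B" and lpos: "0 < mlambda n B"
    and x: "x \<in> Attr n B" and nN: "n \<le> Suc N" and ij: "crit_equiv n A i j"
  shows "row_mult n (mpow n B N) i x = row_mult n (mpow n B N) j x"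
proof -
  have "(i, j) \<in> (crit_edges n A)\<^sup>*" using ij by (simp add: crit_equiv_def)
  then show ?thesis
  proof (induction rule: rtrancl_induct)
    case (step a b)
    obtain d where "a < n" "d < n" "(a + d) mod n = b" "\<forall>v<n. B v ((v + d) mod n) = mlambda n B"
      using crit_edge_diag_shift[OF nnA ciA nnB ciB le lam step(2)] by blast
    then show ?case
      using step.IH attr_row_mult_mpow_diag_invariant[OF nnB ciB lpos _ _ x nN] by metis
  qed simp
qed

theorem lemma5:
  fixes n :: nat and A B :: "nat \<Rightarrow> nat \<Rightarrow> real" and x :: "nat \<Rightarrow> real"
  assumes "nonneg_mat n A" and "nonneg_mat n B"
    and "circulant n A" and "circulant n B"
    and "mlambda n A = mlambda n B" and "mlambda n A \<noteq> 0"
    and "mat_le n A B"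
    and "\<forall>i<n. 0 \<le> x i"
  shows "x \<in> Attr n B \<longleftrightarrow>
    (\<forall>i<n. \<forall>j<n. crit_equiv n A i j \<longrightarrow>
       row_mult n (mpow n B (n^2)) i x = row_mult n (mpow n B (n^2)) j x)"
proof -
  have lpos: "0 < mlambda n A"
    using assms(6) mlambda_nonneg[of n A] by simp
  obtain \<tau> where tn: "\<tau> < n" and diagA: "\<forall>v<n. A v ((v + \<tau>) mod n) = mlambda n A"
    using circulant_mlambda_diag[OF assms(1,3,6)] by blast
  have diagB: "\<forall>v<n. B v ((v + \<tau>) mod n) = mlambda n B"
    using mlambda_entry_of_le[OF assms(7,2,4,5)] diagA tn by simp
  have nN: "n \<le> Suc (n^2)" by (cases n) (auto simp: power2_eq_square)
  show ?thesis
  proof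
    assume "x \<in> Attr n B"
    then show "\<forall>i<n. \<forall>j<n. crit_equiv n A i j \<longrightarrow>
        row_mult n (mpow n B (n^2)) i x = row_mult n (mpow n B (n^2)) j x"
      using attr_row_mult_mpow_eq_if_crit_equiv[OF assms(1,3,2,4,7,5) _ _ nN] lpos assms(5) by simp
  next
    assume "\<forall>i<n. \<forall>j<n. crit_equiv n A i j \<longrightarrow>
        row_mult n (mpow n B (n^2)) i x = row_mult n (mpow n B (n^2)) j x"
    then have "\<forall>i<n. row_mult n (mpow n B (n^2)) ((i + \<tau>) mod n) x = row_mult n (mpow n B (n^2)) i x"
      using crit_equiv_diag_shift[OF lpos _ diagA] tn by (metis mod_less_divisor neq0_conv not_less0)
    then show "x \<in> Attr n B"
      using attr_if_row_mult_mpow_diag_invariant[OF assms(2,4) tn diagB nN assms(8)] by blast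
  qed
qed

end
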